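(* Let $n\ge 2$ and let $\sigma_{n-1}\in G_n$ be the automorphism with $\sigma_{n-1}(y_{n-1}y_n)=-y_{n-1}y_n$ and $\sigma_{n-1}(y_jy_{j+1})=y_jy_{j+1}$ for $1\le j\le n-2$. Then $(\mathrm{EC}_n-1)(\sigma_{n-1}(\mathrm{EC}_n)-1)=(x_n-\mathrm{EC}_{n-1}(x_1,\dots,x_{n-1}))^2$. In particular $\mathrm{EC}_n=1$ implies $x_n=\mathrm{EC}_{n-1}(x_1,\dots,x_{n-1})$.
   Context: Let $x_1,\dots,x_n$ be algebraically independent indeterminates over $\mathbb{Q}$; in an algebraic closure fix $y_j$ with $y_j^2=1-x_j^2$. For indices $i_1<\dots<i_m$, $\mathrm{EC}_m(x_{i_1},\dots,x_{i_m})=\sum_{S\subseteq\{i_1,\dots,i_m\},\ |S|\text{ even}}(-1)^{|S|/2}\prod_{j\in S}y_j\prod_{j\notin S}x_j$, and $\mathrm{EC}_n=\mathrm{EC}_n(x_1,\dots,x_n)$. $G_n$ is the Galois group of $\mathbb{Q}(x_1,\dots,x_n,\ y_iy_j:1\le i<j\le n)$ over $\mathbb{Q}(x_1,\dots,x_n)$. *)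

theory Defs
  imports Complex_Main "HOL-Library.Poly_Mapping"
begin

definition mpoly_eval :: "((nat \<Rightarrow>\<^sub>0 nat) \<Rightarrow>\<^sub>0 rat) \<Rightarrow> (nat \<Rightarrow> 'a::field_char_0) \<Rightarrow> 'a" where
  "mpoly_eval p x = (\<Sum>m\<in>Poly_Mapping.keys p. of_rat (Poly_Mapping.lookup p m) * (\<Prod>i\<in>Poly_Mapping.keys m. x i ^ Poly_Mapping.lookup m i))"

definition alg_indep :: "(nat \<Rightarrow> 'a::field_char_0) \<Rightarrow> nat set \<Rightarrow> bool" where
  "alg_indep x I \<longleftrightarrow> inj_on x I \<and>
     (\<forall>p. (\<forall>m\<in>Poly_Mapping.keys p. Poly_Mapping.keys m \<subseteq> I) \<and> mpoly_eval p x = 0 \<longrightarrow> p = 0)"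

inductive_set gen_field :: "'a::field set \<Rightarrow> 'a set" for S where
  gen_base: "a \<in> S \<Longrightarrow> a \<in> gen_field S"
| gen_zero: "0 \<in> gen_field S"
| gen_one: "1 \<in> gen_field S"
| gen_add: "a \<in> gen_field S \<Longrightarrow> b \<in> gen_field S \<Longrightarrow> a + b \<in> gen_field S"
| gen_uminus: "a \<in> gen_field S \<Longrightarrow> - a \<in> gen_field S"
| gen_mult: "a \<in> gen_field S \<Longrightarrow> b \<in> gen_field S \<Longrightarrow> a * b \<in> gen_field S"
| gen_inverse: "a \<in> gen_field S \<Longrightarrow> inverse a \<in> gen_field S"

definition base_field :: "(nat \<Rightarrow> 'a::field) \<Rightarrow> nat \<Rightarrow> 'a set" where
  "base_field x n = gen_field (x ` {1..n})"

definition L_field :: "(nat \<Rightarrow> 'a::field) \<Rightarrow> (nat \<Rightarrow> 'a) \<Rightarrow> nat \<Rightarrow> 'a set" where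
  "L_field x y n = gen_field (x ` {1..n} \<union> {y i * y j | i j. 1 \<le> i \<and> i < j \<and> j \<le> n})"

text \<open>G_n: automorphisms of L_n fixing Q(x_1,...,x_n) pointwise (as functions on the
  ambient field; only their values on L_n matter).\<close>
definition G_n :: "(nat \<Rightarrow> 'a::field) \<Rightarrow> (nat \<Rightarrow> 'a) \<Rightarrow> nat \<Rightarrow> ('a \<Rightarrow> 'a) set" where
  "G_n x y n = {\<sigma>. bij_betw \<sigma> (L_field x y n) (L_field x y n)
      \<and> (\<forall>a\<in>L_field x y n. \<forall>b\<in>L_field x y n. \<sigma> (a + b) = \<sigma> a + \<sigma> b \<and> \<sigma> (a * b) = \<sigma> a * \<sigma> b)
      \<and> (\<forall>z\<in>base_field x n. \<sigma> z = z)}"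

definition EC :: "(nat \<Rightarrow> 'a::comm_ring_1) \<Rightarrow> (nat \<Rightarrow> 'a) \<Rightarrow> nat set \<Rightarrow> 'a" where
  "EC x y I = (\<Sum>S\<in>{S. S \<subseteq> I \<and> even (card S)}.
      (-1) ^ (card S div 2) * (\<Prod>j\<in>S. y j) * (\<Prod>j\<in>I - S. x j))"

end

theory Submission
  imports Defs
begin

(*
  Write EC_I for EC x y I and let OC_I be the analogous sum over the odd
  subsets of I.  Splitting the subsets of insert k I by whether they contain k gives the
  "angle addition" recurrences
      EC_{I+k} = EC_I x_k - OC_I y_k,      OC_{I+k} = OC_I x_k + EC_I y_k,
  and hence EC_I^2 + OC_I^2 = prod_{j in I} (x_j^2 + y_j^2), which is 1 on the unit circle.
  On the Galois side, sigma_{n-1} acts on every product y_a y_b (a < b) as the substitution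
  y_n -> -y_n does: this propagates from adjacent pairs via (y_a y_c)(y_c y_b) = y_c^2 y_a y_b,
  where y_c^2 = 1 - x_c^2 is a nonzero element of the base field.  Every monomial of EC_n
  contains an even number of y's, so sigma_{n-1}(EC_n) = EC_{n-1} x_n + OC_{n-1} y_n, while
  EC_n = EC_{n-1} x_n - OC_{n-1} y_n, and the product formula becomes a polynomial identity.
*)

definition ec_term :: "(nat \<Rightarrow> 'a::comm_ring_1) \<Rightarrow> (nat \<Rightarrow> 'a) \<Rightarrow> nat set \<Rightarrow> nat set \<Rightarrow> 'a" where
  "ec_term x y I S = (-1) ^ (card S div 2) * (\<Prod>j\<in>S. y j) * (\<Prod>j\<in>I - S. x j)"

definition OC :: "(nat \<Rightarrow> 'a::comm_ring_1) \<Rightarrow> (nat \<Rightarrow> 'a) \<Rightarrow> nat set \<Rightarrow> 'a" where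
  "OC x y I = (\<Sum>S\<in>{S. S \<subseteq> I \<and> odd (card S)}. ec_term x y I S)"

lemma EC_eq_sum_ec_term: "EC x y I = (\<Sum>S\<in>{S. S \<subseteq> I \<and> even (card S)}. ec_term x y I S)"
  unfolding EC_def ec_term_def by (rule refl)

lemma sum_subsets_insert:
  fixes f :: "nat set \<Rightarrow> 'a::comm_monoid_add"
  assumes "finite I" "k \<notin> I"
  shows "(\<Sum>S\<in>{S. S \<subseteq> insert k I \<and> P (card S)}. f S) =
         (\<Sum>S\<in>{S. S \<subseteq> I \<and> P (card S)}. f S) + (\<Sum>S\<in>{S. S \<subseteq> I \<and> P (Suc (card S))}. f (insert k S))"
proof -
  define g where "g S = (if P (card S) then f S else 0)" for S
  have filter: "(\<Sum>S\<in>{S. S \<subseteq> J \<and> Q S}. h S) = (\<Sum>S\<in>Pow J. if Q S then h S else 0)"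
    if "finite J" for J :: "nat set" and Q and h :: "nat set \<Rightarrow> 'a"
    using sum.inter_filter[of "Pow J" h Q] that by (simp add: Pow_def)
  have inj: "inj_on (insert k) (Pow I)"
    using assms(2) by (intro inj_onI) (metis PowD insert_ident subsetD)
  have disjoint: "Pow I \<inter> insert k ` Pow I = {}" using assms(2) by blast
  have card_insert: "card (insert k S) = Suc (card S)" if "S \<in> Pow I" for S
  proof -
    have "finite S" "k \<notin> S" using that assms finite_subset by auto
    then show ?thesis by simp
  qed
  have "(\<Sum>S\<in>{S. S \<subseteq> insert k I \<and> P (card S)}. f S) = sum g (Pow (insert k I))"
    using filter[of "insert k I"] assms(1) unfolding g_def by simp
  also have "\<dots> = sum g (Pow I) + sum (g \<circ> insert k) (Pow I)"
    unfolding Pow_insert using assms(1) disjoint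
    by (simp add: sum.union_disjoint sum.reindex[OF inj])
  also have "sum (g \<circ> insert k) (Pow I) = (\<Sum>S\<in>Pow I. if P (Suc (card S)) then f (insert k S) else 0)"
    using card_insert unfolding g_def by (intro sum.cong) simp_all
  finally show ?thesis
    using filter[of I] assms(1) unfolding g_def by simp
qed

lemma ec_term_insert_outside:
  assumes "finite I" "k \<notin> I" "S \<subseteq> I"
  shows "ec_term x y (insert k I) S = ec_term x y I S * x k"
proof -
  have "insert k I - S = insert k (I - S)" using assms by auto
  then show ?thesis using assms unfolding ec_term_def by (simp add: algebra_simps)
qed

lemma ec_term_insert_inside:
  assumes "finite I" "k \<notin> I" "S \<subseteq> I"
  shows "ec_term x y (insert k I) (insert k S) =
           (if odd (card S) then - 1 else 1) * ec_term x y I S * y k"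
proof -
  have S: "finite S" "k \<notin> S" using assms finite_subset by auto
  have "insert k I - insert k S = I - S" using assms by auto
  moreover have "Suc (card S) div 2 = (if odd (card S) then Suc (card S div 2) else card S div 2)"
    by presburger
  ultimately show ?thesis using S unfolding ec_term_def by (simp add: algebra_simps)
qed

(* The recurrences obtained by adding one index k to I (angle addition for cos and sin). *)
lemma EC_insert:
  fixes x y :: "nat \<Rightarrow> 'a::comm_ring_1"
  assumes "finite I" "k \<notin> I"
  shows "EC x y (insert k I) = EC x y I * x k - OC x y I * y k"
proof -
  have "EC x y (insert k I) = (\<Sum>S\<in>{S. S \<subseteq> I \<and> even (card S)}. ec_term x y (insert k I) S)
          + (\<Sum>S\<in>{S. S \<subseteq> I \<and> odd (card S)}. ec_term x y (insert k I) (insert k S))"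
    unfolding EC_eq_sum_ec_term
    using sum_subsets_insert[OF assms, where P = even and f = "ec_term x y (insert k I)"] by simp
  also have "\<dots> = (\<Sum>S\<in>{S. S \<subseteq> I \<and> even (card S)}. ec_term x y I S * x k)
          + (\<Sum>S\<in>{S. S \<subseteq> I \<and> odd (card S)}. - (ec_term x y I S * y k))"
    using assms by (intro arg_cong2[where f = "(+)"] sum.cong)
                   (simp_all add: ec_term_insert_outside ec_term_insert_inside)
  finally show ?thesis unfolding EC_eq_sum_ec_term OC_def by (simp add: sum_distrib_right sum_negf)
qed

lemma OC_insert:
  fixes x y :: "nat \<Rightarrow> 'a::comm_ring_1"
  assumes "finite I" "k \<notin> I"
  shows "OC x y (insert k I) = OC x y I * x k + EC x y I * y k"
proof -
  have "OC x y (insert k I) = (\<Sum>S\<in>{S. S \<subseteq> I \<and> odd (card S)}. ec_term x y (insert k I) S)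
          + (\<Sum>S\<in>{S. S \<subseteq> I \<and> even (card S)}. ec_term x y (insert k I) (insert k S))"
    unfolding OC_def
    using sum_subsets_insert[OF assms, where P = odd and f = "ec_term x y (insert k I)"] by simp
  also have "\<dots> = (\<Sum>S\<in>{S. S \<subseteq> I \<and> odd (card S)}. ec_term x y I S * x k)
          + (\<Sum>S\<in>{S. S \<subseteq> I \<and> even (card S)}. ec_term x y I S * y k)"
    using assms by (intro arg_cong2[where f = "(+)"] sum.cong)
                   (simp_all add: ec_term_insert_outside ec_term_insert_inside)
  finally show ?thesis unfolding EC_eq_sum_ec_term OC_def by (simp add: sum_distrib_right)
qed

lemma EC_empty: "EC x y {} = 1"
proof -
  have empty: "{S. S \<subseteq> {} \<and> even (card S)} = {{}}" by auto
  show ?thesis unfolding EC_def empty by simp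
qed

lemma OC_empty: "OC x y {} = 0"
proof -
  have empty: "{S. S \<subseteq> {} \<and> odd (card S)} = {}" by auto
  show ?thesis unfolding OC_def empty by simp
qed

(* The recurrences are a rotation, so EC^2 + OC^2 is multiplicative:
   EC_I^2 + OC_I^2 = prod_{j in I} (x_j^2 + y_j^2). *)
lemma EC_OC_sum_of_squares:
  fixes x y :: "nat \<Rightarrow> 'a::comm_ring_1"
  assumes "finite I"
  shows "(EC x y I)^2 + (OC x y I)^2 = (\<Prod>j\<in>I. (x j)^2 + (y j)^2)"
  using assms
proof (induction I rule: finite_induct)
  case empty
  then show ?case by (simp add: EC_empty OC_empty)
next
  case (insert k I)
  have "(EC x y I * x k - OC x y I * y k)^2 + (OC x y I * x k + EC x y I * y k)^2
        = ((EC x y I)^2 + (OC x y I)^2) * ((x k)^2 + (y k)^2)"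
    by (simp add: power2_eq_square algebra_simps)
  then show ?case using insert by (simp add: EC_insert OC_insert mult.commute)
qed

lemma EC_OC_cong:
  assumes "\<forall>j\<in>I. y j = y' j"
  shows "EC x y I = EC x y' I" "OC x y I = OC x y' I"
proof -
  have "ec_term x y I S = ec_term x y' I S" if "S \<subseteq> I" for S
    using that assms unfolding ec_term_def by (metis (no_types, lifting) prod.cong subsetD)
  then show "EC x y I = EC x y' I" "OC x y I = OC x y' I"
    unfolding EC_eq_sum_ec_term OC_def by (auto intro!: sum.cong)
qed

lemma EC_sign_flip_product:
  fixes x y :: "nat \<Rightarrow> 'a::comm_ring_1"
  assumes I: "finite I" "k \<notin> I"
    and unit_circle: "\<forall>j\<in>insert k I. (x j)^2 + (y j)^2 = 1"
  shows "(EC x y (insert k I) - 1) * (EC x (y(k := - y k)) (insert k I) - 1) = (x k - EC x y I)^2"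
proof -
  define A B where "A = EC x y I" and "B = OC x y I"
  have "\<forall>j\<in>I. (y(k := - y k)) j = y j" using I(2) by simp
  then have flipped: "EC x (y(k := - y k)) (insert k I) = A * x k + B * y k"
    using EC_insert[OF I, of x "y(k := - y k)"] EC_OC_cong[of I "y(k := - y k)" y x]
    unfolding A_def B_def by simp
  have unflipped: "EC x y (insert k I) = A * x k - B * y k"
    unfolding A_def B_def by (rule EC_insert[OF I])
  have "(\<Prod>j\<in>I. (x j)^2 + (y j)^2) = 1" using unit_circle by simp
  then have AB: "B^2 = 1 - A^2"
    using EC_OC_sum_of_squares[OF I(1), of x y] unfolding A_def B_def by (simp add: eq_diff_eq add.commute)
  have yk: "(y k)^2 = 1 - (x k)^2" using unit_circle by (simp add: eq_diff_eq add.commute)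
  have "(A * x k - B * y k - 1) * (A * x k + B * y k - 1) = (A * x k - 1)^2 - B^2 * (y k)^2"
    by (simp add: power2_eq_square algebra_simps)
  also have "\<dots> = (A * x k - 1)^2 - (1 - A^2) * (1 - (x k)^2)" by (simp only: AB yk)
  also have "\<dots> = (x k - A)^2" by (simp add: power2_eq_square algebra_simps)
  finally show ?thesis unfolding flipped unflipped A_def B_def .
qed

lemma gen_field_diff: "a \<in> gen_field G \<Longrightarrow> b \<in> gen_field G \<Longrightarrow> a - b \<in> gen_field G"
  using gen_field.gen_add[OF _ gen_field.gen_uminus, of a G b] by simp

lemma gen_field_power: "a \<in> gen_field G \<Longrightarrow> a ^ k \<in> gen_field G"
  by (induction k) (auto intro: gen_field.intros)

lemma gen_field_sum: "\<forall>i\<in>A. f i \<in> gen_field G \<Longrightarrow> sum f A \<in> gen_field G"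
  by (induction A rule: infinite_finite_induct) (auto intro: gen_field.intros)

lemma gen_field_prod: "\<forall>i\<in>A. f i \<in> gen_field G \<Longrightarrow> prod f A \<in> gen_field G"
  by (induction A rule: infinite_finite_induct) (auto intro: gen_field.intros)

lemma gen_field_mono: "A \<subseteq> B \<Longrightarrow> gen_field A \<subseteq> gen_field B"
proof
  fix z assume "A \<subseteq> B" "z \<in> gen_field A"
  from \<open>z \<in> gen_field A\<close> show "z \<in> gen_field B"
    by (induction rule: gen_field.induct) (use \<open>A \<subseteq> B\<close> in \<open>auto intro: gen_field.intros\<close>)
qed

lemma base_field_subset_L_field: "base_field x n \<subseteq> L_field x y n"
  unfolding base_field_def L_field_def by (rule gen_field_mono) auto

lemma y_pair_in_L_field: "1 \<le> i \<Longrightarrow> i < j \<Longrightarrow> j \<le> n \<Longrightarrow> y i * y j \<in> L_field x y n"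
  unfolding L_field_def by (blast intro: gen_field.gen_base)

lemma G_n_fixes_base:
  "\<sigma> \<in> G_n x y n \<Longrightarrow> z \<in> base_field x n \<Longrightarrow> \<sigma> z = z"
  unfolding G_n_def by blast

lemma G_n_mult:
  "\<sigma> \<in> G_n x y n \<Longrightarrow> a \<in> L_field x y n \<Longrightarrow> b \<in> L_field x y n \<Longrightarrow> \<sigma> (a * b) = \<sigma> a * \<sigma> b"
  unfolding G_n_def by blast

lemma G_n_add:
  "\<sigma> \<in> G_n x y n \<Longrightarrow> a \<in> L_field x y n \<Longrightarrow> b \<in> L_field x y n \<Longrightarrow> \<sigma> (a + b) = \<sigma> a + \<sigma> b"
  unfolding G_n_def by blast

lemma G_n_sum:
  assumes \<sigma>: "\<sigma> \<in> G_n x y n" and f: "\<forall>i\<in>A. f i \<in> L_field x y n"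
  shows "\<sigma> (sum f A) = (\<Sum>i\<in>A. \<sigma> (f i))"
proof -
  have "(0 :: 'a) \<in> base_field x n" unfolding base_field_def by (rule gen_field.gen_zero)
  then have zero: "\<sigma> 0 = 0" using G_n_fixes_base[OF \<sigma>] by simp
  from f show ?thesis
  proof (induction A rule: infinite_finite_induct)
    case (insert i A)
    have "f i \<in> L_field x y n" "sum f A \<in> L_field x y n"
      using insert.prems unfolding L_field_def by (simp_all add: gen_field_sum)
    then show ?case using insert G_n_add[OF \<sigma>] by simp
  qed (simp_all add: zero)
qed

(* If sigma acts on the adjacent products y_j y_{j+1} as a substitution y -> y' with
   y'_c^2 = y_c^2, then it acts in the same way on all products y_a y_b with a < b: the
   relation (y_a y_c)(y_c y_b) = y_c^2 (y_a y_b) lets one pass from b = c to b = c + 1, since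
   y_c^2 is a nonzero element of the base field. *)
lemma G_n_pair_products:
  fixes x y y' :: "nat \<Rightarrow> 'a::field"
  assumes \<sigma>: "\<sigma> \<in> G_n x y n"
    and squares: "\<forall>c\<in>{1..n}. (y c)^2 \<in> base_field x n \<and> y c \<noteq> 0 \<and> (y' c)^2 = (y c)^2"
    and adjacent: "\<forall>j. 1 \<le> j \<and> j + 1 \<le> n \<longrightarrow> \<sigma> (y j * y (j + 1)) = y' j * y' (j + 1)"
    and ab: "1 \<le> a" "a < b" "b \<le> n"
  shows "\<sigma> (y a * y b) = y' a * y' b"
  using ab(2,3)
proof (induction b)
  case (Suc c)
  show ?case
  proof (cases "a = c")
    case True
    then show ?thesis using adjacent ab(1) Suc.prems by auto
  next
    case False
    then have ac: "a < c" "c < Suc c" "Suc c \<le> n" using Suc.prems by auto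
    define q where "q = (y c)^2"
    have q: "q \<in> base_field x n" "q \<noteq> 0" "(y' c)^2 = q"
      using squares ac ab(1) unfolding q_def by auto
    have L: "y a * y c \<in> L_field x y n" "y c * y (Suc c) \<in> L_field x y n"
            "y a * y (Suc c) \<in> L_field x y n" "q \<in> L_field x y n"
      using ac ab(1) q(1) base_field_subset_L_field[of x n y] by (auto intro!: y_pair_in_L_field)
    have relation: "(y a * y c) * (y c * y (Suc c)) = q * (y a * y (Suc c))"
      unfolding q_def by (simp add: power2_eq_square algebra_simps)
    have "q * \<sigma> (y a * y (Suc c)) = \<sigma> (q * (y a * y (Suc c)))"
      using G_n_mult[OF \<sigma> L(4,3)] G_n_fixes_base[OF \<sigma> q(1)] by simp
    also have "\<dots> = \<sigma> (y a * y c) * \<sigma> (y c * y (Suc c))"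
      unfolding relation[symmetric] using G_n_mult[OF \<sigma> L(1,2)] .
    also have "\<dots> = (y' a * y' c) * (y' c * y' (Suc c))"
      using Suc.IH ac adjacent ab(1) by auto
    also have "\<dots> = q * (y' a * y' (Suc c))"
      unfolding q(3)[symmetric] by (simp add: power2_eq_square algebra_simps)
    finally show ?thesis using q(2) by simp
  qed
qed simp

lemma G_n_even_products:
  fixes x y y' :: "nat \<Rightarrow> 'a::field"
  assumes \<sigma>: "\<sigma> \<in> G_n x y n"
    and pairs: "\<And>a b. 1 \<le> a \<Longrightarrow> a < b \<Longrightarrow> b \<le> n \<Longrightarrow> \<sigma> (y a * y b) = y' a * y' b"
  shows "T \<subseteq> {1..n} \<Longrightarrow> even (card T) \<Longrightarrow> prod y T \<in> L_field x y n \<and> \<sigma> (prod y T) = prod y' T"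
proof (induction "card T" arbitrary: T rule: less_induct)
  case less
  show ?case
  proof (cases "T = {}")
    case True
    have "(1 :: 'a) \<in> base_field x n" unfolding base_field_def by (rule gen_field.gen_one)
    then show ?thesis
      using True G_n_fixes_base[OF \<sigma>] base_field_subset_L_field[of x n y] by auto
  next
    case False
    have fin: "finite T" using less.prems finite_subset by blast
    obtain a b where ab: "a \<in> T" "b \<in> T" "a < b"
    proof -
      obtain c where c: "c \<in> T" using False by blast
      then have "odd (card (T - {c}))" using fin less.prems(2) False
        by (simp add: card_Diff_singleton card_gt_0_iff)
      then obtain d where "d \<in> T" "d \<noteq> c" by (metis card.empty DiffE ex_in_conv insertI1 odd_card_imp_not_empty)
      then show ?thesis using that c by (metis linorder_neq_iff)
    qed
    define T' where "T' = T - {a, b}"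
    have T: "T = insert a (insert b T')" "a \<notin> insert b T'" "b \<notin> T'" "finite T'"
      using ab fin unfolding T'_def by auto
    have "card T = Suc (Suc (card T'))" using T by simp
    then have IH: "prod y T' \<in> L_field x y n \<and> \<sigma> (prod y T') = prod y' T'"
      using less.hyps[of T'] less.prems unfolding T'_def by auto
    have range: "1 \<le> a" "b \<le> n" using ab less.prems(1) by auto
    have pair_L: "y a * y b \<in> L_field x y n"
      using y_pair_in_L_field[OF range(1) ab(3) range(2)] .
    have split: "prod f T = (f a * f b) * prod f T'" for f :: "nat \<Rightarrow> 'a"
      using T by (simp add: mult.assoc)
    have "\<sigma> (prod y T) = \<sigma> (y a * y b) * \<sigma> (prod y T')"
      unfolding split using G_n_mult[OF \<sigma> pair_L] IH by blast
    also have "\<dots> = prod y' T"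
      unfolding split using pairs[OF range(1) ab(3) range(2)] IH by simp
    finally show ?thesis
      using pair_L IH unfolding split L_field_def by (auto intro: gen_field.gen_mult)
  qed
qed

(* Every monomial of EC contains an even number of y's, so sigma acts on EC_n as the
   substitution y -> y'. *)
lemma G_n_EC:
  fixes x y y' :: "nat \<Rightarrow> 'a::field"
  assumes \<sigma>: "\<sigma> \<in> G_n x y n"
    and even_products: "\<And>T. T \<subseteq> {1..n} \<Longrightarrow> even (card T) \<Longrightarrow>
                          prod y T \<in> L_field x y n \<and> \<sigma> (prod y T) = prod y' T"
  shows "\<sigma> (EC x y {1..n}) = EC x y' {1..n}"
proof -
  have coeff_base: "(-1) ^ (card S div 2) * prod x ({1..n} - S) \<in> base_field x n" for S
    unfolding base_field_def
    by (intro gen_field.gen_mult gen_field_power gen_field_prod)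
       (auto intro: gen_field.intros)
  have monomial: "(-1) ^ (card S div 2) * prod y S * prod x ({1..n} - S) \<in> L_field x y n \<and>
       \<sigma> ((-1) ^ (card S div 2) * prod y S * prod x ({1..n} - S))
         = (-1) ^ (card S div 2) * prod y' S * prod x ({1..n} - S)"
    if "S \<subseteq> {1..n}" "even (card S)" for S
  proof -
    let ?c = "(-1) ^ (card S div 2) * prod x ({1..n} - S)"
    have c: "?c \<in> L_field x y n" "\<sigma> ?c = ?c"
      using coeff_base base_field_subset_L_field[of x n y] G_n_fixes_base[OF \<sigma>] by auto
    have eq: "(-1) ^ (card S div 2) * prod f S * prod x ({1..n} - S) = ?c * prod f S"
      for f :: "nat \<Rightarrow> 'a" by (simp add: algebra_simps)
    show ?thesis
      unfolding eq using c even_products[OF that] G_n_mult[OF \<sigma>] unfolding L_field_def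
      by (auto intro: gen_field.gen_mult)
  qed
  show ?thesis
    unfolding EC_def using monomial by (subst G_n_sum[OF \<sigma>]) (auto intro: sum.cong)
qed

lemma alg_indep_square_ne_one:
  fixes x :: "nat \<Rightarrow> 'a::field_char_0"
  assumes indep: "alg_indep x I" and c: "c \<in> I"
  shows "(x c)^2 \<noteq> 1"
proof
  assume root: "(x c)^2 = 1"
  define m :: "nat \<Rightarrow>\<^sub>0 nat" where "m = Poly_Mapping.single c 2"
  define p :: "(nat \<Rightarrow>\<^sub>0 nat) \<Rightarrow>\<^sub>0 rat" where "p = Poly_Mapping.single m 1 - Poly_Mapping.single 0 1"
  have m_c: "Poly_Mapping.lookup m c = 2" unfolding m_def by simp
  then have m: "m \<noteq> 0" "Poly_Mapping.keys m = {c}"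
    unfolding m_def by (auto simp del: lookup_single_eq)
  have coeffs: "Poly_Mapping.lookup p m = 1" "Poly_Mapping.lookup p 0 = -1"
    using m(1) unfolding p_def by (simp_all add: lookup_minus lookup_single lookup_one)
  have keys: "Poly_Mapping.keys p = {m, 0}"
  proof
    show "Poly_Mapping.keys p \<subseteq> {m, 0}"
      unfolding p_def using keys_diff[of "Poly_Mapping.single m (1::rat)" "Poly_Mapping.single 0 1"]
      by auto
    show "{m, 0} \<subseteq> Poly_Mapping.keys p" using coeffs by (auto simp: in_keys_iff)
  qed
  have "mpoly_eval p x = (x c)^2 - 1"
    unfolding mpoly_eval_def keys using m m_c coeffs by simp
  then have "p = 0" using indep root m(2) keys c unfolding alg_indep_def by auto
  then show False using coeffs by simp
qed

lemma y_square_in_base_field: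
  fixes x y :: "nat \<Rightarrow> 'a::field_char_0"
  assumes indep: "alg_indep x {1..n}"
    and unit_circle: "\<forall>j\<in>{1..n}. (y j)^2 = 1 - (x j)^2"
    and c: "c \<in> {1..n}"
  shows "(y c)^2 \<in> base_field x n" "y c \<noteq> 0"
proof -
  have yc: "(y c)^2 = 1 - (x c)^2" using unit_circle c by blast
  have "1 - (x c)^2 \<in> base_field x n" unfolding base_field_def
    using c by (intro gen_field_diff gen_field_power) (auto intro: gen_field.intros)
  then show "(y c)^2 \<in> base_field x n" unfolding yc .
  show "y c \<noteq> 0" using alg_indep_square_ne_one[OF indep c] yc by auto
qed

lemma last_sign_flip_on_adjacent_products:
  fixes y :: "nat \<Rightarrow> 'a::comm_ring_1"
  assumes last: "\<sigma> (y (n - 1) * y n) = - (y (n - 1) * y n)"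
    and others: "\<forall>j\<in>{1..n - 2}. \<sigma> (y j * y (j + 1)) = y j * y (j + 1)"
    and j: "1 \<le> j" "j + 1 \<le> n"
  shows "\<sigma> (y j * y (j + 1)) = (y(n := - y n)) j * (y(n := - y n)) (j + 1)"
proof (cases "j + 1 = n")
  case True
  then have "j = n - 1" by simp
  then show ?thesis using True last by simp
next
  case False
  then show ?thesis using j others by auto
qed

theorem mainTheorem7:
  fixes x y :: "nat \<Rightarrow> 'a::field_char_0" and n :: nat and \<sigma> :: "'a \<Rightarrow> 'a"
  assumes "n \<ge> 2"
    and "alg_indep x {1..n}"
    and "\<forall>j\<in>{1..n}. (y j)\<^sup>2 = 1 - (x j)\<^sup>2"
    and "\<sigma> \<in> G_n x y n"
    and "\<sigma> (y (n - 1) * y n) = - (y (n - 1) * y n)"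
    and "\<forall>j\<in>{1..n - 2}. \<sigma> (y j * y (j + 1)) = y j * y (j + 1)"
  shows "(EC x y {1..n} - 1) * (\<sigma> (EC x y {1..n}) - 1) = (x n - EC x y {1..n - 1})\<^sup>2
         \<and> (EC x y {1..n} = 1 \<longrightarrow> x n = EC x y {1..n - 1})"
proof -
  define y' where "y' = y(n := - y n)"
  have squares: "\<forall>c\<in>{1..n}. (y c)^2 \<in> base_field x n \<and> y c \<noteq> 0 \<and> (y' c)^2 = (y c)^2"
  proof
    fix c assume "c \<in> {1..n}"
    then show "(y c)^2 \<in> base_field x n \<and> y c \<noteq> 0 \<and> (y' c)^2 = (y c)^2"
      using y_square_in_base_field[OF assms(2,3)] unfolding y'_def by simp
  qed
  have adjacent: "\<forall>j. 1 \<le> j \<and> j + 1 \<le> n \<longrightarrow> \<sigma> (y j * y (j + 1)) = y' j * y' (j + 1)"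
  proof (intro allI impI)
    fix j assume "1 \<le> j \<and> j + 1 \<le> n"
    then show "\<sigma> (y j * y (j + 1)) = y' j * y' (j + 1)"
      unfolding y'_def using last_sign_flip_on_adjacent_products[OF assms(5,6)] by simp
  qed
  have "\<sigma> (EC x y {1..n}) = EC x (y(n := - y n)) {1..n}"
    using G_n_EC[OF assms(4) G_n_even_products[OF assms(4) G_n_pair_products[OF assms(4) squares adjacent]]]
    unfolding y'_def .
  moreover have "{1..n} = insert n {1..n - 1}" "n \<notin> {1..n - 1}" using assms(1) by auto
  moreover have "\<forall>j\<in>{1..n}. (x j)^2 + (y j)^2 = 1" using assms(3) by simp
  ultimately have "(EC x y {1..n} - 1) * (\<sigma> (EC x y {1..n}) - 1) = (x n - EC x y {1..n - 1})^2"
    using EC_sign_flip_product[of "{1..n - 1}" n x y] by simp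
  then show ?thesis by auto
qed

end
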